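(* Let a binary game be given as described in the context, and suppose Assumption (A1) holds. Then a vector $(x_i,y_i)_{i\in I}$ is a Nash equilibrium of the binary game if and only if there exist vectors $\big(\widetilde y_i^{(1)},\widetilde y_i^{(0)},\widetilde\lambda_i^{(1)},\widetilde\lambda_i^{(0)},\kappa_i^{(1)},\kappa_i^{(0)}\big)_{i\in I}$ such that, with $\zeta_i^{(1)}=\zeta_i^{(0)}=0$ for all $i\in I$, the point $\big(x_i,y_i,\widetilde y_i^{(1)},\widetilde y_i^{(0)},\widetilde\lambda_i^{(1)},\widetilde\lambda_i^{(0)},\kappa_i^{(1)},\kappa_i^{(0)},\zeta_i^{(1)},\zeta_i^{(0)}\big)_{i\in I}$ is a feasible point of problem (P).
   Context: Binary game: players $i\in I=\{1,\dots,n\}$. Player $i$ chooses a binary variable $x_i\in\{0,1\}$ and a continuous vector $y_i\in\mathbb{R}^m$, and solves $\min_{x_i,y_i} f_i(x_i,y_i,y_{-i})$ subject to $g_i(x_i,y_i)\le 0$, where $g_i:\{0,1\}\times\mathbb{R}^m\to\mathbb{R}^k$, $y_{-i}=(y_j)_{j\ne i}$ are the rivals' continuous decisions (which depend on the rivals' binary decisions), and $K_i=\{(x_i,y_i): g_i(x_i,y_i)\le 0\}$. Nash equilibrium: a vector $((x_i^*,y_i^* )\in K_i)_{i\in I}$ such that for every $i$: (a) $y_i^*$ minimizes $f_i(x_i^*,\cdot,y_{-i}^* )$ over $\{y_i: g_i(x_i^*,y_i)\le0\}$; and (b) $f_i(x_i^*,y_i^*,y_{-i}^* )\le f_i(x_i^\times,y_i^\times,y_{-i}^*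 )$, where $x_i^\times=1-x_i^*$ and $y_i^\times$ minimizes $f_i(x_i^\times,\cdot,y_{-i}^* )$ over $\{y_i: g_i(x_i^\times,y_i)\le 0\}$. Assumption (A1): for each $i$ and each fixed value of $x_i$ (and fixed $y_{-i}$), the first-order (KKT) conditions of player $i$'s problem with respect to $y_i$ are necessary and sufficient for optimality, and the feasible region $\{y_i: g_i(x_i,y_i)\le 0\}$ is compact and non-empty. Problem (P): given a sufficiently large constant $\widetilde K>0$ (larger than the difference between any upper and lower bounds on each $y_i$ and than the difference between the maximum and minimum values of each $f_i$) and functions $F$ of $(x_i,y_i)_{i\in I}$ and $G$ of the compensation variables, minimize $F((x_i,y_i)_{i\in I})+G((\zeta_i^{(1)},\zeta_i^{(0)})_{i\in I})$ over $x_i\in\{0,1\}$, $y_i,\widetilde y_i^{(1)},\widetilde y_i^{(0)}\in\mathbb{R}^m$, $\widetilde\lambda_i^{(1)},\widetilde\lambda_i^{(0)}\in\mathbb{R}^k_+$, $\kappa_i^{(1)},\kappa_i^{(0)},\zeta_i^{(1)},\zeta_i^{(0)}\in\mathbb{R}_+$, subject to, for all $i\in I$ and both $b\in\{0,1\}$: $\nabla_{y_i} f_i(b,\widetilde y_i^{(b)},y_{-i})+(\widetilde\lambda_i^{(b)})^T\nabla_{y_i} g_i(b,\widetilde y_i^{(b)})=0$; $0\le -g_i(b,\widetilde y_i^{(b)})\perp \widetilde\lambda_i^{(b)}\ge 0$; $f_i(1,\widetilde y_i^{(1)},y_{-i})+\kappa_i^{(1)}-\zeta_i^{(1)}-\kappa_i^{(0)}+\zeta_i^{(0)}=f_i(0,\widetilde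 y_i^{(0)},y_{-i})$; $\kappa_i^{(1)}+\zeta_i^{(1)}\le x_i\widetilde K$; $\kappa_i^{(0)}+\zeta_i^{(0)}\le (1-x_i)\widetilde K$; $\widetilde y_i^{(0)}-x_i\widetilde K\le y_i\le \widetilde y_i^{(0)}+x_i\widetilde K$; $\widetilde y_i^{(1)}-(1-x_i)\widetilde K\le y_i\le \widetilde y_i^{(1)}+(1-x_i)\widetilde K$ (componentwise). *)

theory Defs
  imports "HOL-Analysis.Analysis"
begin

text \<open>Binary decisions are reals in {0,1}.
  f i b v yo : objective of player i with own binary decision b, own continuous
  decision v, and rivals' decisions yo.  The rivals' profile y_{-i} is represented
  by the full profile with the i-th entry masked out (others y i).\<close>

definition others :: "('p \<Rightarrow> real^'m) \<Rightarrow> 'p \<Rightarrow> ('p \<Rightarrow> real^'m)" where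
  "others y i = y(i := 0)"

definition feas :: "('p \<Rightarrow> real \<Rightarrow> real^'m \<Rightarrow> real^'k) \<Rightarrow> 'p \<Rightarrow> real \<Rightarrow> (real^'m) set" where
  "feas g i b = {v. \<forall>j. g i b v $ j \<le> 0}"

definition is_min ::
  "('p \<Rightarrow> real \<Rightarrow> real^'m \<Rightarrow> ('p \<Rightarrow> real^'m) \<Rightarrow> real) \<Rightarrow>
   ('p \<Rightarrow> real \<Rightarrow> real^'m \<Rightarrow> real^'k) \<Rightarrow> 'p \<Rightarrow> real \<Rightarrow> ('p \<Rightarrow> real^'m) \<Rightarrow> real^'m \<Rightarrow> bool" where
  "is_min f g i b yo v \<longleftrightarrow> v \<in> feas g i b \<and> (\<forall>w \<in> feas g i b. f i b v yo \<le> f i b w yo)"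

definition stationary ::
  "('p \<Rightarrow> real \<Rightarrow> real^'m \<Rightarrow> ('p \<Rightarrow> real^'m) \<Rightarrow> real^'m) \<Rightarrow>
   ('p \<Rightarrow> real \<Rightarrow> real^'m \<Rightarrow> real^'m^'k) \<Rightarrow> 'p \<Rightarrow> real \<Rightarrow> ('p \<Rightarrow> real^'m) \<Rightarrow> real^'m \<Rightarrow> real^'k \<Rightarrow> bool" where
  "stationary gradf gradg i b yo v lam \<longleftrightarrow>
     gradf i b v yo + (\<Sum>j\<in>UNIV. lam $ j *\<^sub>R (gradg i b v $ j)) = 0"

definition compl ::
  "('p \<Rightarrow> real \<Rightarrow> real^'m \<Rightarrow> real^'k) \<Rightarrow> 'p \<Rightarrow> real \<Rightarrow> real^'m \<Rightarrow> real^'k \<Rightarrow> bool" where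
  "compl g i b v lam \<longleftrightarrow>
     (\<forall>j. 0 \<le> - (g i b v $ j) \<and> 0 \<le> lam $ j \<and> (- (g i b v $ j)) * lam $ j = 0)"

definition KKT ::
  "('p \<Rightarrow> real \<Rightarrow> real^'m \<Rightarrow> ('p \<Rightarrow> real^'m) \<Rightarrow> real^'m) \<Rightarrow>
   ('p \<Rightarrow> real \<Rightarrow> real^'m \<Rightarrow> real^'m^'k) \<Rightarrow>
   ('p \<Rightarrow> real \<Rightarrow> real^'m \<Rightarrow> real^'k) \<Rightarrow> 'p \<Rightarrow> real \<Rightarrow> ('p \<Rightarrow> real^'m) \<Rightarrow> real^'m \<Rightarrow> bool" where
  "KKT gradf gradg g i b yo v \<longleftrightarrow>
     (\<exists>lam. stationary gradf gradg i b yo v lam \<and> compl g i b v lam)"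

definition nash ::
  "('p \<Rightarrow> real \<Rightarrow> real^'m \<Rightarrow> ('p \<Rightarrow> real^'m) \<Rightarrow> real) \<Rightarrow>
   ('p \<Rightarrow> real \<Rightarrow> real^'m \<Rightarrow> real^'k) \<Rightarrow> ('p \<Rightarrow> real) \<Rightarrow> ('p \<Rightarrow> real^'m) \<Rightarrow> bool" where
  "nash f g x y \<longleftrightarrow>
     (\<forall>i. x i \<in> {0, 1} \<and> y i \<in> feas g i (x i)
        \<and> is_min f g i (x i) (others y i) (y i)
        \<and> (\<forall>w. is_min f g i (1 - x i) (others y i) w \<longrightarrow>
               f i (x i) (y i) (others y i) \<le> f i (1 - x i) w (others y i)))"

definition P_feasible ::
  "('p \<Rightarrow> real \<Rightarrow> real^'m \<Rightarrow> ('p \<Rightarrow> real^'m) \<Rightarrow> real) \<Rightarrow>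
   ('p \<Rightarrow> real \<Rightarrow> real^'m \<Rightarrow> real^'k) \<Rightarrow>
   ('p \<Rightarrow> real \<Rightarrow> real^'m \<Rightarrow> ('p \<Rightarrow> real^'m) \<Rightarrow> real^'m) \<Rightarrow>
   ('p \<Rightarrow> real \<Rightarrow> real^'m \<Rightarrow> real^'m^'k) \<Rightarrow> real \<Rightarrow>
   ('p \<Rightarrow> real) \<Rightarrow> ('p \<Rightarrow> real^'m) \<Rightarrow> ('p \<Rightarrow> real^'m) \<Rightarrow> ('p \<Rightarrow> real^'m) \<Rightarrow>
   ('p \<Rightarrow> real^'k) \<Rightarrow> ('p \<Rightarrow> real^'k) \<Rightarrow> ('p \<Rightarrow> real) \<Rightarrow> ('p \<Rightarrow> real) \<Rightarrow>
   ('p \<Rightarrow> real) \<Rightarrow> ('p \<Rightarrow> real) \<Rightarrow> bool" where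
  "P_feasible f g gradf gradg K x y yt1 yt0 lam1 lam0 kap1 kap0 zeta1 zeta0 \<longleftrightarrow>
     (\<forall>i. x i \<in> {0, 1}
        \<and> (\<forall>j. 0 \<le> lam1 i $ j) \<and> (\<forall>j. 0 \<le> lam0 i $ j)
        \<and> 0 \<le> kap1 i \<and> 0 \<le> kap0 i \<and> 0 \<le> zeta1 i \<and> 0 \<le> zeta0 i
        \<and> stationary gradf gradg i 1 (others y i) (yt1 i) (lam1 i)
        \<and> stationary gradf gradg i 0 (others y i) (yt0 i) (lam0 i)
        \<and> compl g i 1 (yt1 i) (lam1 i)
        \<and> compl g i 0 (yt0 i) (lam0 i)
        \<and> f i 1 (yt1 i) (others y i) + kap1 i - zeta1 i - kap0 i + zeta0 i
            = f i 0 (yt0 i) (others y i)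
        \<and> kap1 i + zeta1 i \<le> x i * K
        \<and> kap0 i + zeta0 i \<le> (1 - x i) * K
        \<and> (\<forall>j. yt0 i $ j - x i * K \<le> y i $ j \<and> y i $ j \<le> yt0 i $ j + x i * K)
        \<and> (\<forall>j. yt1 i $ j - (1 - x i) * K \<le> y i $ j \<and> y i $ j \<le> yt1 i $ j + (1 - x i) * K))"

end

theory Submission
  imports Defs
begin

text \<open>With \<open>\<zeta> = 0\<close> the constraints of (P) decouple into one block per player
  (\<open>P_row\<close>). If x_i = 1, the big-M constraints force the copy for the value 1 to be y_i and the
  compensation for the value 0 to vanish, so the value equation says that y_i is no worse than the
  copy for the value 0; by (A1) the KKT blocks make both copies optimal for their binary value
  (symmetrically for x_i = 0). Conversely, at an equilibrium one takes y_i and a minimizer for the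
  other binary value, which exists by compactness, and compensates the nonnegative gap between the
  two optimal values, which is below the big-M constant.\<close>

definition binary_best_response ::
  "('p \<Rightarrow> real \<Rightarrow> real^'m \<Rightarrow> ('p \<Rightarrow> real^'m) \<Rightarrow> real) \<Rightarrow>
   ('p \<Rightarrow> real \<Rightarrow> real^'m \<Rightarrow> real^'k) \<Rightarrow> 'p \<Rightarrow> ('p \<Rightarrow> real^'m) \<Rightarrow> real \<Rightarrow> real^'m \<Rightarrow> bool" where
  "binary_best_response f g i yo xi yi \<longleftrightarrow>
     xi \<in> {0, 1} \<and> yi \<in> feas g i xi \<and> is_min f g i xi yo yi
     \<and> (\<forall>w. is_min f g i (1 - xi) yo w \<longrightarrow> f i xi yi yo \<le> f i (1 - xi) w yo)"

definition P_row ::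
  "('p \<Rightarrow> real \<Rightarrow> real^'m \<Rightarrow> ('p \<Rightarrow> real^'m) \<Rightarrow> real) \<Rightarrow>
   ('p \<Rightarrow> real \<Rightarrow> real^'m \<Rightarrow> real^'k) \<Rightarrow>
   ('p \<Rightarrow> real \<Rightarrow> real^'m \<Rightarrow> ('p \<Rightarrow> real^'m) \<Rightarrow> real^'m) \<Rightarrow>
   ('p \<Rightarrow> real \<Rightarrow> real^'m \<Rightarrow> real^'m^'k) \<Rightarrow> real \<Rightarrow> 'p \<Rightarrow> ('p \<Rightarrow> real^'m) \<Rightarrow>
   real \<Rightarrow> real^'m \<Rightarrow> real^'m \<Rightarrow> real^'m \<Rightarrow> real^'k \<Rightarrow> real^'k \<Rightarrow> real \<Rightarrow> real \<Rightarrow> bool" where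
  "P_row f g gradf gradg K i yo xi yi v1 v0 lam1 lam0 kap1 kap0 \<longleftrightarrow>
     xi \<in> {0, 1}
     \<and> (\<forall>j. 0 \<le> lam1 $ j) \<and> (\<forall>j. 0 \<le> lam0 $ j) \<and> 0 \<le> kap1 \<and> 0 \<le> kap0
     \<and> stationary gradf gradg i 1 yo v1 lam1 \<and> stationary gradf gradg i 0 yo v0 lam0
     \<and> compl g i 1 v1 lam1 \<and> compl g i 0 v0 lam0
     \<and> f i 1 v1 yo + kap1 - kap0 = f i 0 v0 yo
     \<and> kap1 \<le> xi * K \<and> kap0 \<le> (1 - xi) * K
     \<and> (\<forall>j. v0 $ j - xi * K \<le> yi $ j \<and> yi $ j \<le> v0 $ j + xi * K)
     \<and> (\<forall>j. v1 $ j - (1 - xi) * K \<le> yi $ j \<and> yi $ j \<le> v1 $ j + (1 - xi) * K)"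

lemma nash_iff_binary_best_response:
  "nash f g x y \<longleftrightarrow> (\<forall>i. binary_best_response f g i (others y i) (x i) (y i))"
  unfolding nash_def binary_best_response_def ..

lemma ex_P_feasible_zero_compensation_iff:
  "(\<exists>yt1 yt0 lam1 lam0 kap1 kap0.
      P_feasible f g gradf gradg K x y yt1 yt0 lam1 lam0 kap1 kap0 (\<lambda>_. 0) (\<lambda>_. 0))
   \<longleftrightarrow> (\<forall>i. \<exists>v1 v0 lam1 lam0 kap1 kap0.
      P_row f g gradf gradg K i (others y i) (x i) (y i) v1 v0 lam1 lam0 kap1 kap0)"
proof -
  have "P_feasible f g gradf gradg K x y yt1 yt0 lam1 lam0 kap1 kap0 (\<lambda>_. 0) (\<lambda>_. 0) \<longleftrightarrow>
      (\<forall>i. P_row f g gradf gradg K i (others y i) (x i) (y i)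
        (yt1 i) (yt0 i) (lam1 i) (lam0 i) (kap1 i) (kap0 i))" for yt1 yt0 lam1 lam0 kap1 kap0
    unfolding P_feasible_def P_row_def by simp
  then show ?thesis by (simp only: choice_iff)
qed

lemma box_zero_width_iff:
  fixes a y :: "real^'n"
  shows "(\<forall>j. a $ j - 0 \<le> y $ j \<and> y $ j \<le> a $ j + 0) \<longleftrightarrow> y = a"
  by (auto simp: vec_eq_iff intro: order_antisym)

lemma compl_multiplier_nonneg: "compl g i b v lam \<Longrightarrow> 0 \<le> lam $ j"
  unfolding compl_def by blast

lemma is_min_exists:
  assumes "compact (feas g i b)" "feas g i b \<noteq> {}"
    and "continuous_on (feas g i b) (\<lambda>u. f i b u yo)"
  shows "\<exists>w. is_min f g i b yo w"
  using continuous_attains_inf[OF assms(1,2,3)] unfolding is_min_def by blast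

lemma binary_best_response_if_P_row:
  assumes KKT_sufficient: "\<And>b v. b \<in> {0, 1} \<Longrightarrow> KKT gradf gradg g i b yo v \<Longrightarrow> is_min f g i b yo v"
    and row: "P_row f g gradf gradg K i yo xi yi v1 v0 lam1 lam0 kap1 kap0"
  shows "binary_best_response f g i yo xi yi"
proof -
  have min1: "is_min f g i 1 yo v1" and min0: "is_min f g i 0 yo v0"
    using row KKT_sufficient[of 1 v1] KKT_sufficient[of 0 v0] unfolding P_row_def KKT_def by auto
  consider "xi = 1" | "xi = 0" using row unfolding P_row_def by blast
  then show ?thesis
  proof cases
    case 1
    with row have "yi = v1" "kap0 = 0" "f i 1 v1 yo \<le> f i 0 v0 yo"
      unfolding P_row_def box_zero_width_iff[symmetric] by auto
    with 1 min1 min0 show ?thesis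
      unfolding binary_best_response_def is_min_def by force
  next
    case 2
    with row have "yi = v0" "kap1 = 0" "f i 0 v0 yo \<le> f i 1 v1 yo"
      unfolding P_row_def box_zero_width_iff[symmetric] by auto
    with 2 min1 min0 show ?thesis
      unfolding binary_best_response_def is_min_def by force
  qed
qed

text \<open>The chosen copy is y_i itself and the other one a minimizer w for the other binary value;
  the compensation for the chosen value is the gap between the two optimal values.\<close>
lemma P_row_if_binary_best_response:
  assumes KKT_necessary: "\<And>b v. b \<in> {0, 1} \<Longrightarrow> is_min f g i b yo v \<Longrightarrow> KKT gradf gradg g i b yo v"
    and min_exists: "\<And>b. b \<in> {0, 1} \<Longrightarrow> \<exists>w. is_min f g i b yo w"
    and K_y: "\<And>b b' v w j. b \<in> {0, 1} \<Longrightarrow> b' \<in> {0, 1} \<Longrightarrow>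
               v \<in> feas g i b \<Longrightarrow> w \<in> feas g i b' \<Longrightarrow> \<bar>v $ j - w $ j\<bar> < K"
    and K_f: "\<And>b b' v w. b \<in> {0, 1} \<Longrightarrow> b' \<in> {0, 1} \<Longrightarrow>
               v \<in> feas g i b \<Longrightarrow> w \<in> feas g i b' \<Longrightarrow> \<bar>f i b v yo - f i b' w yo\<bar> < K"
    and response: "binary_best_response f g i yo xi yi"
  shows "\<exists>v1 v0 lam1 lam0 kap1 kap0. P_row f g gradf gradg K i yo xi yi v1 v0 lam1 lam0 kap1 kap0"
proof -
  have xi: "xi \<in> {0, 1}" and yi: "yi \<in> feas g i xi" "is_min f g i xi yo yi"
    and better: "\<And>w. is_min f g i (1 - xi) yo w \<Longrightarrow> f i xi yi yo \<le> f i (1 - xi) w yo"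
    using response unfolding binary_best_response_def by auto
  have other: "1 - xi \<in> {0, 1}" using xi by auto
  obtain w where w: "is_min f g i (1 - xi) yo w" using min_exists[OF other] by blast
  have w_feas: "w \<in> feas g i (1 - xi)" using w unfolding is_min_def by blast
  obtain lam lam' where
    lam: "stationary gradf gradg i xi yo yi lam" "compl g i xi yi lam" and
    lam': "stationary gradf gradg i (1 - xi) yo w lam'" "compl g i (1 - xi) w lam'"
    using KKT_necessary[OF xi yi(2)] KKT_necessary[OF other w] unfolding KKT_def by blast
  have gap: "0 \<le> f i (1 - xi) w yo - f i xi yi yo" "f i (1 - xi) w yo - f i xi yi yo \<le> K"
    using better[OF w] K_f[OF other xi w_feas yi(1)] by auto
  have close: "w $ j - K \<le> yi $ j \<and> yi $ j \<le> w $ j + K" for j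
    using K_y[OF xi other yi(1) w_feas, of j] by linarith
  from xi consider "xi = 0" | "xi = 1" by blast
  then show ?thesis
  proof cases
    case 1
    then have "P_row f g gradf gradg K i yo xi yi w yi lam' lam 0 (f i 1 w yo - f i 0 yi yo)"
      using lam lam' gap close unfolding P_row_def
      by (auto simp: compl_multiplier_nonneg)
    then show ?thesis by blast
  next
    case 2
    then have "P_row f g gradf gradg K i yo xi yi yi w lam lam' (f i 0 w yo - f i 1 yi yo) 0"
      using lam lam' gap close unfolding P_row_def
      by (auto simp: compl_multiplier_nonneg)
    then show ?thesis by blast
  qed
qed

theorem theorem1:
  fixes f :: "'p::finite \<Rightarrow> real \<Rightarrow> real^'m::finite \<Rightarrow> ('p \<Rightarrow> real^'m) \<Rightarrow> real"
    and g :: "'p \<Rightarrow> real \<Rightarrow> real^'m \<Rightarrow> real^'k::finite"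
    and gradf :: "'p \<Rightarrow> real \<Rightarrow> real^'m \<Rightarrow> ('p \<Rightarrow> real^'m) \<Rightarrow> real^'m"
    and gradg :: "'p \<Rightarrow> real \<Rightarrow> real^'m \<Rightarrow> real^'m^'k"
    and K :: real
    and x :: "'p \<Rightarrow> real" and y :: "'p \<Rightarrow> real^'m"
  assumes grad_f: "\<And>i b v yo. b \<in> {0, 1} \<Longrightarrow>
             ((\<lambda>u. f i b u yo) has_derivative (\<lambda>h. gradf i b v yo \<bullet> h)) (at v)"
    and grad_g: "\<And>i b v j. b \<in> {0, 1} \<Longrightarrow>
             ((\<lambda>u. g i b u $ j) has_derivative (\<lambda>h. (gradg i b v $ j) \<bullet> h)) (at v)"
    and A1_KKT: "\<And>i b yy v. b \<in> {0, 1} \<Longrightarrow>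
             is_min f g i b (others yy i) v \<longleftrightarrow> KKT gradf gradg g i b (others yy i) v"
    and A1_compact: "\<And>i b. b \<in> {0, 1} \<Longrightarrow> compact (feas g i b) \<and> feas g i b \<noteq> {}"
    and K_pos: "0 < K"
    and K_bounds_y: "\<And>i b b' v w j. b \<in> {0, 1} \<Longrightarrow> b' \<in> {0, 1} \<Longrightarrow>
             v \<in> feas g i b \<Longrightarrow> w \<in> feas g i b' \<Longrightarrow> \<bar>v $ j - w $ j\<bar> < K"
    and K_bounds_f: "\<And>i b b' v w yy yy'. b \<in> {0, 1} \<Longrightarrow> b' \<in> {0, 1} \<Longrightarrow>
             v \<in> feas g i b \<Longrightarrow> w \<in> feas g i b' \<Longrightarrow>
             (\<forall>l. l \<noteq> i \<longrightarrow> yy l \<in> feas g l 0 \<union> feas g l 1) \<Longrightarrow>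
             (\<forall>l. l \<noteq> i \<longrightarrow> yy' l \<in> feas g l 0 \<union> feas g l 1) \<Longrightarrow>
             \<bar>f i b v (others yy i) - f i b' w (others yy' i)\<bar> < K"
  shows "nash f g x y \<longleftrightarrow>
     (\<exists>yt1 yt0 lam1 lam0 kap1 kap0.
        P_feasible f g gradf gradg K x y yt1 yt0 lam1 lam0 kap1 kap0 (\<lambda>_. 0) (\<lambda>_. 0))"
  unfolding ex_P_feasible_zero_compensation_iff nash_iff_binary_best_response
proof (intro iffI allI)
  fix i
  assume "\<forall>i. \<exists>v1 v0 lam1 lam0 kap1 kap0.
    P_row f g gradf gradg K i (others y i) (x i) (y i) v1 v0 lam1 lam0 kap1 kap0"
  then obtain v1 v0 lam1 lam0 kap1 kap0 where
    "P_row f g gradf gradg K i (others y i) (x i) (y i) v1 v0 lam1 lam0 kap1 kap0" by blast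
  with A1_KKT show "binary_best_response f g i (others y i) (x i) (y i)"
    by (intro binary_best_response_if_P_row) auto
next
  fix i
  assume equilibrium: "\<forall>i. binary_best_response f g i (others y i) (x i) (y i)"
  then have rivals_feasible: "\<forall>l. l \<noteq> i \<longrightarrow> y l \<in> feas g l 0 \<union> feas g l 1"
    unfolding binary_best_response_def by (metis UnI1 UnI2 insertE singletonD)
  have "\<exists>w. is_min f g i b (others y i) w" if b: "b \<in> {0, 1}" for b
    using A1_compact[OF b] grad_f[OF b, THEN has_derivative_continuous]
    by (intro is_min_exists) (auto intro: continuous_at_imp_continuous_on)
  with A1_KKT K_bounds_y K_bounds_f[OF _ _ _ _ rivals_feasible rivals_feasible] equilibrium
  show "\<exists>v1 v0 lam1 lam0 kap1 kap0.
    P_row f g gradf gradg K i (others y i) (x i) (y i) v1 v0 lam1 lam0 kap1 kap0"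
    by (intro P_row_if_binary_best_response) auto
qed

end
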